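(* Let $0<\alpha<d$, $\beta\in\mathbb{R}$, $\mathcal{B}_\alpha\in\{\mathcal{B}^c_\alpha,\mathcal{B}^u_\alpha\}$, $1\leq p<d/(1+\alpha+\beta)$ (so $1+\alpha+\beta>0$), $f\in L^p(\mathbb{R}^d)$, and $\varepsilon>0$. Then for any $c_1\geq2$, $c_2\geq1$ there is a set of balls $\widetilde{\mathcal{B}}\subset\mathcal{B}_\alpha$ such that for any two distinct balls $B,A\in\widetilde{\mathcal{B}}$ we have $c_1B\cap c_1A=\emptyset$ or $f_A/f_B\notin(c_2^{-1},c_2)$, and furthermore, writing $q=(p^{-1}-(1+\alpha+\beta)/d)^{-1}$, \[ \int_\varepsilon^\infty\lambda^{q-1}\Bigl|\bigcup\bigl\{B\in\mathcal{B}_\alpha:r(B)^{\alpha+\beta}f_B>\lambda\bigr\}\Bigr|\,d\lambda\leq C\biggl(\sum_{B\in\widetilde{\mathcal{B}}}\bigl(r(B)^{\frac dp-1}f_B\bigr)^p\biggr)^{(1-p(1+\alpha+\beta)/d)^{-1}}, \] where $C$ depends only on $d,\alpha,\beta,p,c_1,c_2$.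
   Context: $f_B=\frac1{|B|}\int_B|f|$, $r(B)$ is the radius of the ball $B$, $cB$ is the ball with the same center and radius $c\,r(B)$, $\overline B$ its closure. $\mathrm{M}^c_\alpha f(x)=\sup_{r>0}r^\alpha f_{B(x,r)}$, $\mathrm{M}^u_\alpha f(x)=\sup_{B\ni x}r(B)^\alpha f_B$ over balls containing $x$. $\mathcal{B}^c_\alpha(x)=\{B(x,r)\}$ with $r$ the largest radius with $\mathrm{M}^c_\alpha f(x)=r^\alpha f_{B(x,r)}$ (empty if none exists); $\mathcal{B}^u_\alpha(x)$ is the set of balls $B$ with $x\in\overline B$, $r(B)^\alpha f_B=\mathrm{M}^u_\alpha f(x)$ and $r(A)^\alpha f_A<\mathrm{M}^u_\alpha f(x)$ for every ball $A\supsetneq B$. $\mathcal{B}^c_\alpha=\bigcup_{x}\mathcal{B}^c_\alpha(x)$, $\mathcal{B}^u_\alpha=\bigcup_x\mathcal{B}^u_\alpha(x)$. *)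

theory Defs
  imports "HOL-Analysis.Analysis"
begin

text \<open>Balls are represented by pairs (centre, radius) with radius > 0;
  the pair (x,r) stands for the open ball ball x r.\<close>

definition avg :: "('a::euclidean_space \<Rightarrow> real) \<Rightarrow> 'a \<Rightarrow> real \<Rightarrow> real" where
  "avg f x r = (LINT y:ball x r|lebesgue. \<bar>f y\<bar>) / measure lebesgue (ball x r)"

definition Mc :: "real \<Rightarrow> ('a::euclidean_space \<Rightarrow> real) \<Rightarrow> 'a \<Rightarrow> ereal" where
  "Mc \<alpha> f x = (SUP r\<in>{0<..}. ereal (r powr \<alpha> * avg f x r))"

definition Mu :: "real \<Rightarrow> ('a::euclidean_space \<Rightarrow> real) \<Rightarrow> 'a \<Rightarrow> ereal" where
  "Mu \<alpha> f x = (SUP yr\<in>{(y,r). 0 < r \<and> x \<in> ball y r}. ereal (snd yr powr \<alpha> * avg f (fst yr) (snd yr)))"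

definition Bc_at :: "real \<Rightarrow> ('a::euclidean_space \<Rightarrow> real) \<Rightarrow> 'a \<Rightarrow> ('a \<times> real) set" where
  "Bc_at \<alpha> f x = {(x, r) | r. 0 < r \<and> ereal (r powr \<alpha> * avg f x r) = Mc \<alpha> f x \<and>
      (\<forall>s>r. ereal (s powr \<alpha> * avg f x s) \<noteq> Mc \<alpha> f x)}"

definition Bu_at :: "real \<Rightarrow> ('a::euclidean_space \<Rightarrow> real) \<Rightarrow> 'a \<Rightarrow> ('a \<times> real) set" where
  "Bu_at \<alpha> f x = {(y, r). 0 < r \<and> x \<in> cball y r \<and> ereal (r powr \<alpha> * avg f y r) = Mu \<alpha> f x \<and>
      (\<forall>z s. 0 < s \<and> ball y r \<subset> ball z s \<longrightarrow> ereal (s powr \<alpha> * avg f z s) < Mu \<alpha> f x)}"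

definition Bc :: "real \<Rightarrow> ('a::euclidean_space \<Rightarrow> real) \<Rightarrow> ('a \<times> real) set" where
  "Bc \<alpha> f = (\<Union>x. Bc_at \<alpha> f x)"

definition Bu :: "real \<Rightarrow> ('a::euclidean_space \<Rightarrow> real) \<Rightarrow> ('a \<times> real) set" where
  "Bu \<alpha> f = (\<Union>x. Bu_at \<alpha> f x)"

end

theory Submission
  imports Defs
begin

text \<open>
  For f in L^p every average obeys f_B <= C_f r(B)^(-d/p), so, as alpha + beta < d/p, the balls of
  the family whose level r(B)^(alpha+beta) f_B exceeds epsilon have bounded radii. A Vitali-type
  selection (Zorn's lemma) then gives a subfamily of pairwise non-conflicting balls such that every
  ball of level above epsilon is selected or conflicts with a selected ball of at least half its
  radius. Each ball B(x,r) of the family maximises s^alpha f_B(x,s) over s >= r; comparing with the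
  concentric ball that contains a conflicting selected ball A bounds r(A) by a multiple of r(B).
  Hence (3 c1 + 2) A contains B, and the level of A is at least a fixed fraction kappa of that of B.
  The superlevel union at height t is thus covered by the dilated selected balls of level above
  kappa t, and integrating t^(q-1) over t >= epsilon bounds the left-hand side by
  sum_A |(3 c1 + 2) A| (level(A) / kappa)^q = C sum_A a_A^e, where a_A = (r(A)^(d/p-1) f_A)^p.
  Finally sum_A a_A^e <= (sum_A a_A)^e because e >= 1.
\<close>

section \<open>A Vitali-type selection\<close>

definition admissible_selection ::
    "('b \<Rightarrow> real) \<Rightarrow> ('b \<Rightarrow> 'b \<Rightarrow> bool) \<Rightarrow> 'b set \<Rightarrow> 'b set \<Rightarrow> bool" where
  "admissible_selection \<rho> conf F G \<longleftrightarrow> G \<subseteq> F \<and> pairwise (\<lambda>g g'. \<not> conf g g') G \<and>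
     (\<forall>b\<in>F. (\<exists>g\<in>G. conf b g) \<longrightarrow> (\<exists>g\<in>G. conf b g \<and> \<rho> b \<le> 2 * \<rho> g))"

lemma admissible_selection_chain_Union:
  assumes "C \<in> chains (Collect (admissible_selection \<rho> conf F))"
  shows "admissible_selection \<rho> conf F (\<Union>C)"
proof -
  have adm: "\<And>G. G \<in> C \<Longrightarrow> admissible_selection \<rho> conf F G" and ch: "chain\<^sub>\<subseteq> C"
    using assms unfolding chains_def by auto
  have "pairwise (\<lambda>g g'. \<not> conf g g') (\<Union>C)"
    by (rule pairwise_chain_Union[OF _ ch]) (use adm in \<open>simp add: admissible_selection_def\<close>)
  moreover have "\<exists>g\<in>\<Union>C. conf b g \<and> \<rho> b \<le> 2 * \<rho> g"
    if "b \<in> F" "G \<in> C" "g \<in> G" "conf b g" for b G g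
    using adm[OF \<open>G \<in> C\<close>] that unfolding admissible_selection_def by blast
  ultimately show ?thesis
    using adm unfolding admissible_selection_def by blast
qed

lemma admissible_selection_insert:
  assumes adm: "admissible_selection \<rho> conf F G"
    and sym: "\<And>b b'. b \<in> F \<Longrightarrow> b' \<in> F \<Longrightarrow> conf b b' = conf b' b"
    and b: "b \<in> F - G" "\<forall>g\<in>G. \<not> conf b g"
    and large: "\<And>b'. b' \<in> F - G \<Longrightarrow> \<forall>g\<in>G. \<not> conf b' g \<Longrightarrow> \<rho> b' \<le> 2 * \<rho> b"
  shows "admissible_selection \<rho> conf F (insert b G)"
proof -
  have GF: "G \<subseteq> F" using adm unfolding admissible_selection_def by blast
  have "pairwise (\<lambda>g g'. \<not> conf g g') (insert b G)"
    using adm b sym GF unfolding admissible_selection_def pairwise_insert by blast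
  moreover have "\<rho> b' \<le> 2 * \<rho> b"
    if "b' \<in> F" "conf b' b" "\<forall>g\<in>G. \<not> conf b' g" for b'
  proof -
    have "b' \<notin> G" using that b sym by blast
    then show ?thesis using large that by blast
  qed
  ultimately show ?thesis
    using adm b unfolding admissible_selection_def by auto
qed

lemma maximal_admissible_selection_conflicts:
  fixes \<rho> :: "'b \<Rightarrow> real"
  assumes pos: "\<And>b. b \<in> F \<Longrightarrow> 0 < \<rho> b" and bounded: "\<And>b. b \<in> F \<Longrightarrow> \<rho> b \<le> R"
    and sym: "\<And>b b'. b \<in> F \<Longrightarrow> b' \<in> F \<Longrightarrow> conf b b' = conf b' b"
    and adm: "admissible_selection \<rho> conf F G"
    and max: "\<And>G'. admissible_selection \<rho> conf F G' \<Longrightarrow> G \<subseteq> G' \<Longrightarrow> G' = G"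
    and b: "b \<in> F - G"
  shows "\<exists>g\<in>G. conf b g"
proof (rule ccontr)
  define U where "U = {b \<in> F - G. \<forall>g\<in>G. \<not> conf b g}"
  assume "\<not> (\<exists>g\<in>G. conf b g)"
  then have "b \<in> U" using b unfolding U_def by blast
  have bdd: "bdd_above (\<rho> ` U)"
    using bounded unfolding U_def by (intro bdd_aboveI2) auto
  have "0 < Sup (\<rho> ` U)"
    using pos cSUP_upper[OF \<open>b \<in> U\<close> bdd] \<open>b \<in> U\<close> unfolding U_def by force
  then have "Sup (\<rho> ` U) / 2 < Sup (\<rho> ` U)" by simp
  then obtain u where u: "u \<in> U" "Sup (\<rho> ` U) / 2 < \<rho> u"
    using less_cSUP_iff[of U, OF _ bdd] \<open>b \<in> U\<close> by blast
  have "\<rho> b' \<le> 2 * \<rho> u" if "b' \<in> U" for b'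
    using cSUP_upper[OF that bdd] u by linarith
  then have "admissible_selection \<rho> conf F (insert u G)"
    using u by (intro admissible_selection_insert[OF adm sym]) (auto simp: U_def)
  moreover have "u \<notin> G" using u unfolding U_def by blast
  ultimately show False using max by blast
qed

lemma exists_covering_selection:
  fixes \<rho> :: "'b \<Rightarrow> real"
  assumes pos: "\<And>b. b \<in> F \<Longrightarrow> 0 < \<rho> b" and bounded: "\<And>b. b \<in> F \<Longrightarrow> \<rho> b \<le> R"
    and sym: "\<And>b b'. b \<in> F \<Longrightarrow> b' \<in> F \<Longrightarrow> conf b b' = conf b' b"
  obtains G where "G \<subseteq> F" "pairwise (\<lambda>g g'. \<not> conf g g') G"
    "\<And>b. b \<in> F \<Longrightarrow> \<exists>g\<in>G. (g = b \<or> conf b g) \<and> \<rho> b \<le> 2 * \<rho> g"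
proof -
  have "\<forall>C\<in>chains (Collect (admissible_selection \<rho> conf F)). \<Union>C \<in> Collect (admissible_selection \<rho> conf F)"
    using admissible_selection_chain_Union by blast
  from Zorn_Lemma[OF this] obtain G where adm: "admissible_selection \<rho> conf F G"
    and max: "\<And>G'. admissible_selection \<rho> conf F G' \<Longrightarrow> G \<subseteq> G' \<Longrightarrow> G' = G"
    by blast
  have "G \<subseteq> F" "pairwise (\<lambda>g g'. \<not> conf g g') G"
    and cover: "\<And>b. b \<in> F \<Longrightarrow> \<exists>g\<in>G. conf b g \<Longrightarrow> \<exists>g\<in>G. conf b g \<and> \<rho> b \<le> 2 * \<rho> g"
    using adm unfolding admissible_selection_def by blast+
  moreover have "\<exists>g\<in>G. (g = b \<or> conf b g) \<and> \<rho> b \<le> 2 * \<rho> g" if "b \<in> F" for b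
  proof (cases "b \<in> G")
    case True
    then show ?thesis using pos[OF that] by auto
  next
    case False
    then show ?thesis
      using cover that maximal_admissible_selection_conflicts[OF pos bounded sym adm max] by blast
  qed
  ultimately show thesis using that by blast
qed

lemma infsum_cmult_right_ennreal:
  fixes f :: "'b \<Rightarrow> ennreal"
  shows "(\<Sum>\<^sub>\<infinity>x\<in>A. c * f x) = c * (\<Sum>\<^sub>\<infinity>x\<in>A. f x)"
proof -
  have "(\<Sum>\<^sub>\<infinity>x\<in>A. c * f x) = (SUP F\<in>{F. finite F \<and> F \<subseteq> A}. c * sum f F)"
    by (simp add: nonneg_infsum_complete sum_distrib_left)
  also have "\<dots> = c * (\<Sum>\<^sub>\<infinity>x\<in>A. f x)"
    by (simp add: nonneg_infsum_complete SUP_mult_left_ennreal)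
  finally show ?thesis .
qed

lemma sum_le_infsum_ennreal:
  fixes f :: "'b \<Rightarrow> ennreal"
  assumes "finite F" "F \<subseteq> A"
  shows "sum f F \<le> (\<Sum>\<^sub>\<infinity>x\<in>A. f x)"
  using assms by (subst nonneg_infsum_complete) (auto intro!: SUP_upper)

lemma countable_if_infsum_ennreal_finite:
  fixes a :: "'b \<Rightarrow> real"
  assumes finite_sum: "(\<Sum>\<^sub>\<infinity>x\<in>A. ennreal (a x)) \<noteq> \<infinity>" and pos: "\<And>x. x \<in> A \<Longrightarrow> 0 < a x"
  shows "countable A"
proof -
  have "sum a X \<le> enn2real (\<Sum>\<^sub>\<infinity>x\<in>A. ennreal (a x))" if "finite X" "X \<subseteq> A" for X
  proof -
    have "ennreal (sum a X) = (\<Sum>x\<in>X. ennreal (a x))"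
      using pos that by (intro sum_ennreal[symmetric]) (auto intro: less_imp_le)
    also have "\<dots> \<le> (\<Sum>\<^sub>\<infinity>x\<in>A. ennreal (a x))"
      using that by (rule sum_le_infsum_ennreal)
    finally have "enn2real (ennreal (sum a X)) \<le> enn2real (\<Sum>\<^sub>\<infinity>x\<in>A. ennreal (a x))"
      using finite_sum by (intro enn2real_mono) (auto simp: top.not_eq_extremum)
    moreover have "0 \<le> sum a X"
      using pos that by (intro sum_nonneg) (auto intro: less_imp_le)
    ultimately show ?thesis by simp
  qed
  then have "a summable_on A"
    using pos by (intro nonneg_bounded_partial_sums_imp_summable_on eventually_finite_subsets_at_top_weakI)
      (auto intro: less_imp_le)
  then have "countable {x \<in> A. a x \<noteq> 0}"
    by (rule summable_countable_real)
  also have "{x \<in> A. a x \<noteq> 0} = A"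
    using pos by force
  finally show ?thesis .
qed

lemma infsum_ennreal_eq_suminf_from_nat_into:
  fixes h :: "'b \<Rightarrow> ennreal"
  assumes "countable A" "infinite A"
  shows "(\<Sum>\<^sub>\<infinity>x\<in>A. h x) = (\<Sum>n. h (from_nat_into A n))"
proof -
  have "(\<Sum>\<^sub>\<infinity>x\<in>A. h x) = (\<Sum>\<^sub>\<infinity>n\<in>UNIV. h (from_nat_into A n))"
    using bij_betw_from_nat_into[OF assms] by (rule infsum_reindex_bij_betw[symmetric])
  also have "\<dots> = (\<Sum>n. h (from_nat_into A n))"
    by (intro sums_unique has_sum_imp_sums has_sum_infsum nonneg_summable_on_complete) simp
  finally show ?thesis .
qed

lemma emeasure_UN_le_infsum:
  assumes "countable I" and sets: "\<And>i. i \<in> I \<Longrightarrow> A i \<in> sets M"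
  shows "emeasure M (\<Union>i\<in>I. A i) \<le> (\<Sum>\<^sub>\<infinity>i\<in>I. emeasure M (A i))"
proof (cases "finite I")
  case True
  then show ?thesis
    using sets by (simp add: emeasure_subadditive_finite image_subset_iff)
next
  case False
  then have "I \<noteq> {}" by auto
  have "(\<Union>i\<in>I. A i) = (\<Union>n. A (from_nat_into I n))"
    using range_from_nat_into[OF \<open>I \<noteq> {}\<close> \<open>countable I\<close>] by (metis image_image)
  also have "emeasure M \<dots> \<le> (\<Sum>n. emeasure M (A (from_nat_into I n)))"
    using sets from_nat_into[OF \<open>I \<noteq> {}\<close>] by (intro emeasure_subadditive_countably) auto
  also have "\<dots> = (\<Sum>\<^sub>\<infinity>i\<in>I. emeasure M (A i))"
    using \<open>countable I\<close> False by (rule infsum_ennreal_eq_suminf_from_nat_into[symmetric])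
  finally show ?thesis .
qed

lemma nn_integral_infsum:
  fixes h :: "'i \<Rightarrow> 'a \<Rightarrow> ennreal"
  assumes "countable I" and meas: "\<And>i. i \<in> I \<Longrightarrow> h i \<in> borel_measurable M"
  shows "(\<integral>\<^sup>+x. (\<Sum>\<^sub>\<infinity>i\<in>I. h i x) \<partial>M) = (\<Sum>\<^sub>\<infinity>i\<in>I. \<integral>\<^sup>+x. h i x \<partial>M)"
proof (cases "finite I")
  case True
  then show ?thesis
    using meas by (simp add: nn_integral_sum)
next
  case False
  then have "I \<noteq> {}" by auto
  then show ?thesis
    using meas from_nat_into[OF \<open>I \<noteq> {}\<close>]
    by (simp add: infsum_ennreal_eq_suminf_from_nat_into[OF \<open>countable I\<close> False] nn_integral_suminf)
qed

lemma infsum_powr_le_powr_infsum: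
  fixes a :: "'b \<Rightarrow> real"
  assumes pos: "\<And>x. x \<in> A \<Longrightarrow> 0 < a x" and e: "1 \<le> e"
    and finite_sum: "(\<Sum>\<^sub>\<infinity>x\<in>A. ennreal (a x)) \<noteq> \<infinity>"
  shows "(\<Sum>\<^sub>\<infinity>x\<in>A. ennreal (a x powr e)) \<le> ennreal (enn2real (\<Sum>\<^sub>\<infinity>x\<in>A. ennreal (a x)) powr e)"
proof -
  define S where "S = enn2real (\<Sum>\<^sub>\<infinity>x\<in>A. ennreal (a x))"
  have S: "(\<Sum>\<^sub>\<infinity>x\<in>A. ennreal (a x)) = ennreal S" "0 \<le> S"
    using finite_sum unfolding S_def by (auto simp: ennreal_enn2real_if)
  have single: "a x \<le> S" if "x \<in> A" for x
    using sum_le_infsum_ennreal[of "{x}" A "\<lambda>x. ennreal (a x)"] that S by simp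
  have "(\<Sum>\<^sub>\<infinity>x\<in>A. ennreal (a x powr e)) \<le> (\<Sum>\<^sub>\<infinity>x\<in>A. ennreal (S powr (e - 1)) * ennreal (a x))"
  proof (rule infsum_mono)
    fix x assume "x \<in> A"
    have "a x powr e = a x powr (e - 1) * a x" using pos[OF \<open>x \<in> A\<close>] by (simp add: powr_diff)
    also have "\<dots> \<le> S powr (e - 1) * a x"
      using pos[OF \<open>x \<in> A\<close>] single[OF \<open>x \<in> A\<close>] e by (intro mult_right_mono powr_mono2) auto
    finally show "ennreal (a x powr e) \<le> ennreal (S powr (e - 1)) * ennreal (a x)"
      by (simp add: ennreal_mult'[symmetric] ennreal_leI)
  qed (simp_all add: nonneg_summable_on_complete)
  also have "\<dots> = ennreal (S powr (e - 1)) * ennreal S"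
    by (simp add: infsum_cmult_right_ennreal S)
  also have "\<dots> = ennreal (S powr e)"
    using S(2) by (cases "S = 0") (simp_all add: ennreal_mult''[symmetric] powr_diff)
  finally show ?thesis unfolding S_def .
qed

lemma le_add_powr:
  fixes \<tau> p x :: real
  assumes "0 < \<tau>" "1 \<le> p" "0 \<le> x"
  shows "x \<le> \<tau> + \<tau> powr (1 - p) * x powr p"
proof (cases "x \<le> \<tau>")
  case True
  then show ?thesis by (simp add: add_increasing2)
next
  case False
  have "x = \<tau> powr (1 - p) * (x * \<tau> powr (p - 1))"
    using assms by (simp add: powr_add[symmetric])
  also have "\<dots> \<le> \<tau> powr (1 - p) * (x * x powr (p - 1))"
    using False assms by (intro mult_left_mono powr_mono2) auto
  also have "x * x powr (p - 1) = x powr p"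
    using False assms by (simp add: powr_diff)
  finally show ?thesis using assms by linarith
qed

lemma critical_exponents:
  fixes p \<gamma> d :: real
  assumes p: "1 \<le> p" and \<gamma>: "0 < \<gamma>" and p\<gamma>: "p * \<gamma> < d"
  defines "q \<equiv> 1 / (1 / p - \<gamma> / d)" and "e \<equiv> 1 / (1 - p * \<gamma> / d)"
  shows "q = p * e" "1 \<le> e" "1 \<le> q" "d + (\<gamma> - 1) * q = (d / p - 1) * q"
proof -
  have d: "0 < d" using p \<gamma> p\<gamma> by (smt (verit) mult_pos_pos)
  have den: "0 < 1 - p * \<gamma> / d" and den': "0 < 1 / p - \<gamma> / d"
    using p p\<gamma> d by (simp_all add: field_simps)
  show qe: "q = p * e"
    unfolding q_def e_def using p d den den' by (simp add: field_simps)
  show e: "1 \<le> e"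
    unfolding e_def using den p \<gamma> d by (simp add: field_simps)
  show "1 \<le> q"
    unfolding qe using p e by (metis mult_mono' mult_1 zero_le_one)
  have "(d / p - \<gamma>) * q = d"
    unfolding q_def using den' d by (simp add: field_simps)
  then show "d + (\<gamma> - 1) * q = (d / p - 1) * q"
    by (simp add: algebra_simps)
qed

lemma powr_rescale:
  fixes r v M \<kappa> a b d p q e :: real
  assumes "0 < r" "0 < v" "0 < M" "0 < \<kappa>" and "q = p * e" and "d + a * q = b * q"
  shows "(M * r) powr d * (r powr a * v / \<kappa>) powr q = M powr d * (1 / \<kappa>) powr q * ((r powr b * v) powr p) powr e"
proof -
  have "(M * r) powr d * (r powr a * v / \<kappa>) powr q
      = M powr d * (1 / \<kappa>) powr q * (r powr d * r powr (a * q) * v powr q)"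
    using assms(1-4) by (simp add: powr_mult powr_divide powr_powr)
  also have "r powr d * r powr (a * q) = r powr (b * q)"
    using assms(6) by (simp add: powr_add[symmetric])
  also have "r powr (b * q) * v powr q = ((r powr b * v) powr p) powr e"
    using assms(1,2,5) by (simp add: powr_mult powr_powr mult_ac)
  finally show ?thesis .
qed

lemma less_root_if_powr_less:
  fixes t \<alpha> d A :: real
  assumes "0 < t" "0 < \<alpha>" "t powr d < A * t powr (d - \<alpha>)"
  shows "t < A powr (1 / \<alpha>)"
proof -
  have "t powr (d - \<alpha>) * t powr \<alpha> < t powr (d - \<alpha>) * A"
    using assms(3) by (simp add: powr_add[symmetric] mult_ac)
  then have "t powr \<alpha> < A" using assms(1) by simp
  then have "(t powr \<alpha>) powr (1 / \<alpha>) < A powr (1 / \<alpha>)"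
    using assms(1,2) by (intro powr_less_mono2) auto
  then show ?thesis using assms(1,2) by (simp add: powr_powr)
qed

lemma powr_mult_le_if_comparable_radii:
  fixes \<gamma> :: real
  assumes r: "0 < r" and rt: "r \<le> 2 * t" and tr: "t \<le> K * r"
    and c: "0 < c" and avg: "0 < v" "v < c * w"
  shows "min 1 (min ((1/2) powr \<gamma>) (K powr \<gamma>) / c) * (r powr \<gamma> * v) \<le> t powr \<gamma> * w"
proof -
  define m where "m = min ((1/2) powr \<gamma>) (K powr \<gamma>)"
  have t: "0 < t" and K: "0 < K * r" using r rt tr by linarith+
  have "m * r powr \<gamma> \<le> t powr \<gamma>"
  proof (cases "0 \<le> \<gamma>")
    case True
    have "m * r powr \<gamma> \<le> (1/2) powr \<gamma> * r powr \<gamma>"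
      unfolding m_def by (intro mult_right_mono) auto
    also have "\<dots> = (r / 2) powr \<gamma>" using r by (simp add: powr_mult powr_divide)
    also have "\<dots> \<le> t powr \<gamma>" using True r rt by (intro powr_mono2) auto
    finally show ?thesis .
  next
    case False
    have "m * r powr \<gamma> \<le> K powr \<gamma> * r powr \<gamma>"
      unfolding m_def by (intro mult_right_mono) auto
    also have "\<dots> = (K * r) powr \<gamma>" using r K by (simp add: powr_mult zero_less_mult_iff)
    also have "\<dots> \<le> t powr \<gamma>" using False t tr by (intro powr_mono2') auto
    finally show ?thesis .
  qed
  have "min 1 (m / c) * (r powr \<gamma> * v) \<le> (m / c) * (r powr \<gamma> * v)"
    using avg by (intro mult_right_mono) auto
  also have "\<dots> = (m * r powr \<gamma>) * (v / c)" by simp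
  also have "\<dots> \<le> t powr \<gamma> * w"
    using \<open>m * r powr \<gamma> \<le> t powr \<gamma>\<close> avg c unfolding m_def
    by (intro mult_mono) (auto simp: pos_divide_le_eq mult.commute)
  finally show ?thesis unfolding m_def .
qed

lemma measure_ball_powr:
  "0 \<le> r \<Longrightarrow> measure lebesgue (ball (y::'a::euclidean_space) r) = unit_ball_vol DIM('a) * r powr DIM('a)"
  by (cases "r = 0") (simp_all add: content_ball powr_realpow)

lemma avg_eq_ball_integral:
  "0 < r \<Longrightarrow> avg f (y::'a::euclidean_space) r =
     (LINT x:ball y r|lebesgue. \<bar>f x\<bar>) / (unit_ball_vol DIM('a) * r powr DIM('a))"
  unfolding avg_def by (subst measure_ball_powr) simp_all

lemma avg_pos_if_superlevel:
  assumes "0 < r" "0 \<le> \<epsilon>" "\<epsilon> < r powr \<gamma> * avg f y r"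
  shows "0 < avg f y r"
proof -
  have "0 < r powr \<gamma> * avg f y r" using assms(2,3) by linarith
  then show ?thesis using assms(1) by (simp add: zero_less_mult_iff)
qed

lemma ball_subset_if_dilations_intersect:
  assumes "ball y (c * r) \<inter> ball z (c * t) \<noteq> {}"
  shows "ball z t \<subseteq> ball y (c * r + c * t + t)"
proof
  obtain w where w: "dist y w < c * r" "dist z w < c * t"
    using assms by auto
  fix u assume "u \<in> ball z t"
  then have "dist z u < t" by simp
  then show "u \<in> ball y (c * r + c * t + t)"
    using w dist_triangle[of y u w] dist_triangle[of w u z] by (simp add: dist_commute)
qed

definition conflicting :: "('a::euclidean_space \<Rightarrow> real) \<Rightarrow> real \<Rightarrow> real \<Rightarrow> 'a \<times> real \<Rightarrow> 'a \<times> real \<Rightarrow> bool" where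
  "conflicting f c1 c2 b g \<longleftrightarrow> ball (fst b) (c1 * snd b) \<inter> ball (fst g) (c1 * snd g) \<noteq> {} \<and>
     avg f (fst g) (snd g) / avg f (fst b) (snd b) \<in> {1 / c2 <..< c2}"

lemma conflicting_sym:
  assumes "0 < avg f (fst b) (snd b)" "0 < avg f (fst g) (snd g)" "0 < c2"
  shows "conflicting f c1 c2 b g \<longleftrightarrow> conflicting f c1 c2 g b"
proof -
  have "avg f (fst g) (snd g) / avg f (fst b) (snd b) \<in> {1 / c2 <..< c2}
      \<longleftrightarrow> avg f (fst b) (snd b) / avg f (fst g) (snd g) \<in> {1 / c2 <..< c2}"
    using assms by (auto simp: field_simps)
  then show ?thesis unfolding conflicting_def by (auto simp: Int_commute)
qed

definition radially_maximal :: "real \<Rightarrow> ('a::euclidean_space \<Rightarrow> real) \<Rightarrow> 'a \<Rightarrow> real \<Rightarrow> bool" where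
  "radially_maximal \<alpha> f y r \<longleftrightarrow> 0 < r \<and> (\<forall>s>r. s powr \<alpha> * avg f y s \<le> r powr \<alpha> * avg f y r)"

lemma radially_maximal_if_Bc:
  assumes "(y, r) \<in> Bc \<alpha> f"
  shows "radially_maximal \<alpha> f y r"
  unfolding radially_maximal_def
proof (intro conjI allI impI)
  obtain x where "(y, r) \<in> Bc_at \<alpha> f x"
    using assms unfolding Bc_def by blast
  then have y: "y = x" and r: "0 < r" and attained: "ereal (r powr \<alpha> * avg f y r) = Mc \<alpha> f x"
    unfolding Bc_at_def by auto
  show "0 < r" by (fact r)
  fix s assume "r < s"
  then have "ereal (s powr \<alpha> * avg f y s) \<le> Mc \<alpha> f x"
    unfolding Mc_def y using r by (intro SUP_upper) auto
  then have "ereal (s powr \<alpha> * avg f y s) \<le> ereal (r powr \<alpha> * avg f y r)"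
    using attained by (simp add: less_imp_le)
  then show "s powr \<alpha> * avg f y s \<le> r powr \<alpha> * avg f y r"
    by simp
qed

lemma radially_maximal_if_Bu:
  assumes "(y, r) \<in> Bu \<alpha> f"
  shows "radially_maximal \<alpha> f y r"
  unfolding radially_maximal_def
proof (intro conjI allI impI)
  obtain x where "(y, r) \<in> Bu_at \<alpha> f x"
    using assms unfolding Bu_def by blast
  then have r: "0 < r" and attained: "ereal (r powr \<alpha> * avg f y r) = Mu \<alpha> f x"
    and strict: "\<And>z s. 0 < s \<Longrightarrow> ball y r \<subset> ball z s \<Longrightarrow> ereal (s powr \<alpha> * avg f z s) < Mu \<alpha> f x"
    unfolding Bu_at_def by auto
  show "0 < r" by (fact r)
  fix s assume "r < s"
  then have "ball y r \<subset> ball y s"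
    using r by (auto simp: subset_ball ball_eq_ball_iff)
  then have "ereal (s powr \<alpha> * avg f y s) < Mu \<alpha> f x"
    using strict r \<open>r < s\<close> by simp
  then have "ereal (s powr \<alpha> * avg f y s) \<le> ereal (r powr \<alpha> * avg f y r)"
    using attained by (simp add: less_imp_le)
  then show "s powr \<alpha> * avg f y s \<le> r powr \<alpha> * avg f y r"
    by simp
qed

lemma radially_maximal_if_mem_Bc_Bu:
  "b \<in> Bc \<alpha> f \<union> Bu \<alpha> f \<Longrightarrow> radially_maximal \<alpha> f (fst b) (snd b)"
  by (cases b) (auto intro: radially_maximal_if_Bc radially_maximal_if_Bu)

text \<open>A selected ball A dominating B has r(B)/2 <= r(A) <= K r(B), where
  K = (c2 (3 c1 + 2)^(d - alpha))^(1/alpha); so the inner minimum bounds (r(A)/r(B))^(alpha+beta)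
  from below whatever the sign of alpha + beta. The outer min 1 covers the case A = B.\<close>

definition domination_constant :: "real \<Rightarrow> real \<Rightarrow> real \<Rightarrow> real \<Rightarrow> real \<Rightarrow> real" where
  "domination_constant d \<alpha> \<beta> c1 c2 =
     min 1 (min ((1/2) powr (\<alpha> + \<beta>)) (((c2 * (3 * c1 + 2) powr (d - \<alpha>)) powr (1 / \<alpha>)) powr (\<alpha> + \<beta>)) / c2)"

lemma domination_constant_pos:
  assumes "0 \<le> c1" "0 < c2"
  shows "0 < domination_constant d \<alpha> \<beta> c1 c2"
  using assms unfolding domination_constant_def by simp

lemma measure_ball_mult_level_powr:
  fixes M \<kappa> q p e \<gamma> r :: real
  assumes "0 < r" "0 < avg f y r" "0 < M" "0 < \<kappa>"
    and "q = p * e" "DIM('a) + \<gamma> * q = (DIM('a) / p - 1) * q"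
  shows "measure lebesgue (ball (y::'a::euclidean_space) (M * r)) * (r powr \<gamma> * avg f y r / \<kappa>) powr q
       = unit_ball_vol DIM('a) * M powr DIM('a) * (1 / \<kappa>) powr q * ((r powr (DIM('a) / p - 1) * avg f y r) powr p) powr e"
proof -
  have "measure lebesgue (ball y (M * r)) = unit_ball_vol DIM('a) * (M * r) powr DIM('a)"
    using assms(1,3) by (intro measure_ball_powr) simp
  then show ?thesis
    using powr_rescale[OF assms] by simp
qed

section \<open>Integrals over unions of superlevel balls\<close>

lemma nn_integral_powr_superlevel_le:
  fixes \<kappa> \<epsilon> L V q :: real
  assumes "0 < \<kappa>" "0 < \<epsilon>" "0 < L" "0 \<le> V" "1 \<le> q"
  shows "(\<integral>\<^sup>+ t. ennreal (t powr (q - 1)) * indicator {\<epsilon>..} t * indicator {t. \<kappa> * t < L} t * ennreal V \<partial>lborel)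
          \<le> ennreal (V * (L / \<kappa>) powr q)"
proof -
  have "(\<integral>\<^sup>+ t. ennreal (t powr (q - 1)) * indicator {\<epsilon>..} t * indicator {t. \<kappa> * t < L} t * ennreal V \<partial>lborel)
        \<le> (\<integral>\<^sup>+ t. ennreal (V * (L / \<kappa>) powr (q - 1)) * indicator {0..L / \<kappa>} t \<partial>lborel)"
  proof (rule nn_integral_mono)
    fix t :: real
    show "ennreal (t powr (q - 1)) * indicator {\<epsilon>..} t * indicator {t. \<kappa> * t < L} t * ennreal V
          \<le> ennreal (V * (L / \<kappa>) powr (q - 1)) * indicator {0..L / \<kappa>} t"
    proof (cases "\<epsilon> \<le> t \<and> \<kappa> * t < L")
      case True
      then have "0 < t" "t \<le> L / \<kappa>" using assms by (auto simp: field_simps)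
      then have "t powr (q - 1) * V \<le> V * (L / \<kappa>) powr (q - 1)"
        using assms by (simp add: mult.commute mult_left_mono powr_mono2)
      then show ?thesis
        using True \<open>0 < t\<close> \<open>t \<le> L / \<kappa>\<close> assms by (simp add: ennreal_mult'[symmetric] ennreal_leI)
    qed auto
  qed
  also have "\<dots> = ennreal (V * (L / \<kappa>) powr (q - 1) * (L / \<kappa>))"
    using assms by (simp add: nn_integral_cmult_indicator ennreal_mult'[symmetric])
  also have "V * (L / \<kappa>) powr (q - 1) * (L / \<kappa>) = V * (L / \<kappa>) powr q"
    using assms by (simp add: powr_diff)
  finally show ?thesis .
qed

lemma emeasure_superlevel_union_le:
  fixes B G :: "('a::euclidean_space \<times> real) set" and lev :: "'a \<times> real \<Rightarrow> real"
  assumes "countable G" and \<kappa>: "0 < \<kappa>" and t: "\<epsilon> \<le> t"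
    and dominated: "\<And>b. b \<in> B \<Longrightarrow> \<epsilon> < lev b \<Longrightarrow>
       \<exists>g\<in>G. ball (fst b) (snd b) \<subseteq> ball (fst g) (M * snd g) \<and> \<kappa> * lev b \<le> lev g"
  shows "emeasure lebesgue (\<Union>{ball x r | x r. (x, r) \<in> B \<and> t < lev (x, r)})
    \<le> (\<Sum>\<^sub>\<infinity>g\<in>G. indicator {t. \<kappa> * t < lev g} t * ennreal (measure lebesgue (ball (fst g) (M * snd g))))"
proof -
  define U where "U g = (if \<kappa> * t < lev g then ball (fst g) (M * snd g) else {})" for g
  have "\<Union>{ball x r | x r. (x, r) \<in> B \<and> t < lev (x, r)} \<subseteq> (\<Union>g\<in>G. U g)"
  proof safe
    fix u x r assume "(x, r) \<in> B" "t < lev (x, r)" "u \<in> ball x r"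
    moreover obtain g where "g \<in> G" "ball x r \<subseteq> ball (fst g) (M * snd g)" "\<kappa> * lev (x, r) \<le> lev g"
      using dominated[of "(x, r)"] t \<open>(x, r) \<in> B\<close> \<open>t < lev (x, r)\<close> by auto
    moreover have "\<kappa> * t < \<kappa> * lev (x, r)" using \<kappa> \<open>t < lev (x, r)\<close> by simp
    ultimately show "u \<in> (\<Union>g\<in>G. U g)" unfolding U_def by force
  qed
  then have "emeasure lebesgue (\<Union>{ball x r | x r. (x, r) \<in> B \<and> t < lev (x, r)}) \<le> emeasure lebesgue (\<Union>g\<in>G. U g)"
    using \<open>countable G\<close> by (intro emeasure_mono sets.countable_UN') (auto simp: U_def)
  also have "\<dots> \<le> (\<Sum>\<^sub>\<infinity>g\<in>G. emeasure lebesgue (U g))"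
    using \<open>countable G\<close> by (rule emeasure_UN_le_infsum) (simp add: U_def)
  also have "\<dots> = (\<Sum>\<^sub>\<infinity>g\<in>G. indicator {t. \<kappa> * t < lev g} t * ennreal (measure lebesgue (ball (fst g) (M * snd g))))"
    unfolding U_def by (intro infsum_cong) (simp add: emeasure_eq_measure2)
  finally show ?thesis .
qed

lemma nn_integral_superlevel_union_le:
  fixes B G :: "('a::euclidean_space \<times> real) set" and lev :: "'a \<times> real \<Rightarrow> real"
  assumes "countable G" and \<kappa>: "0 < \<kappa>" and \<epsilon>: "0 < \<epsilon>" and q: "1 \<le> q"
    and lev_pos: "\<And>g. g \<in> G \<Longrightarrow> 0 < lev g"
    and dominated: "\<And>b. b \<in> B \<Longrightarrow> \<epsilon> < lev b \<Longrightarrow>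
       \<exists>g\<in>G. ball (fst b) (snd b) \<subseteq> ball (fst g) (M * snd g) \<and> \<kappa> * lev b \<le> lev g"
  shows "(\<integral>\<^sup>+ t. ennreal (t powr (q - 1)) *
            emeasure lebesgue (\<Union>{ball x r | x r. (x, r) \<in> B \<and> t < lev (x, r)}) * indicator {\<epsilon>..} t \<partial>lborel)
         \<le> (\<Sum>\<^sub>\<infinity>g\<in>G. ennreal (measure lebesgue (ball (fst g) (M * snd g)) * (lev g / \<kappa>) powr q))"
proof -
  define h where "h g t = ennreal (t powr (q - 1)) * indicator {\<epsilon>..} t * indicator {t. \<kappa> * t < lev g} t
    * ennreal (measure lebesgue (ball (fst g) (M * snd g)))" for g t
  have "ennreal (t powr (q - 1)) * emeasure lebesgue (\<Union>{ball x r | x r. (x, r) \<in> B \<and> t < lev (x, r)})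
      * indicator {\<epsilon>..} t \<le> (\<Sum>\<^sub>\<infinity>g\<in>G. h g t)" for t
  proof (cases "\<epsilon> \<le> t")
    case True
    then show ?thesis
      using emeasure_superlevel_union_le[OF \<open>countable G\<close> \<kappa> True dominated]
      by (simp add: h_def infsum_cmult_right_ennreal mult.assoc mult_left_mono)
  qed (simp add: h_def)
  then have "(\<integral>\<^sup>+ t. ennreal (t powr (q - 1)) *
            emeasure lebesgue (\<Union>{ball x r | x r. (x, r) \<in> B \<and> t < lev (x, r)}) * indicator {\<epsilon>..} t \<partial>lborel)
      \<le> (\<integral>\<^sup>+ t. (\<Sum>\<^sub>\<infinity>g\<in>G. h g t) \<partial>lborel)"
    by (intro nn_integral_mono)
  also have "\<dots> = (\<Sum>\<^sub>\<infinity>g\<in>G. \<integral>\<^sup>+ t. h g t \<partial>lborel)"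
    using \<open>countable G\<close> by (rule nn_integral_infsum) (simp add: h_def)
  also have "\<dots> \<le> (\<Sum>\<^sub>\<infinity>g\<in>G. ennreal (measure lebesgue (ball (fst g) (M * snd g)) * (lev g / \<kappa>) powr q))"
    unfolding h_def using \<kappa> \<epsilon> q lev_pos
    by (intro infsum_mono nn_integral_powr_superlevel_le) (auto simp: nonneg_summable_on_complete)
  finally show ?thesis .
qed

lemma superlevel_integral_le_powr_sum:
  fixes f :: "'a::euclidean_space \<Rightarrow> real" and B G :: "('a \<times> real) set" and \<gamma> \<kappa> M \<epsilon> p q e :: real
  defines "lev \<equiv> \<lambda>b. snd b powr \<gamma> * avg f (fst b) (snd b)"
    and "a \<equiv> \<lambda>g. (snd g powr (DIM('a) / p - 1) * avg f (fst g) (snd g)) powr p"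
  assumes G: "\<And>g. g \<in> G \<Longrightarrow> 0 < snd g \<and> \<epsilon> < lev g"
    and dominated: "\<And>b. b \<in> B \<Longrightarrow> \<epsilon> < lev b \<Longrightarrow>
       \<exists>g\<in>G. ball (fst b) (snd b) \<subseteq> ball (fst g) (M * snd g) \<and> \<kappa> * lev b \<le> lev g"
    and \<kappa>: "0 < \<kappa>" and \<epsilon>: "0 < \<epsilon>" and M: "0 < M"
    and exponents: "q = p * e" "1 \<le> e" "1 \<le> q" "DIM('a) + \<gamma> * q = (DIM('a) / p - 1) * q"
    and finite: "(\<Sum>\<^sub>\<infinity>g\<in>G. ennreal (a g)) \<noteq> \<infinity>"
  shows "(\<integral>\<^sup>+ t. ennreal (t powr (q - 1)) *
            emeasure lebesgue (\<Union>{ball x r | x r. (x, r) \<in> B \<and> t < r powr \<gamma> * avg f x r})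
            * indicator {\<epsilon>..} t \<partial>lborel)
         \<le> ennreal (unit_ball_vol DIM('a) * M powr DIM('a) * (1 / \<kappa>) powr q
              * enn2real (\<Sum>\<^sub>\<infinity>g\<in>G. ennreal (a g)) powr e)"
proof -
  define C where "C = unit_ball_vol DIM('a) * M powr DIM('a) * (1 / \<kappa>) powr q"
  have C: "0 \<le> C" unfolding C_def by simp
  have avg_pos: "0 < avg f (fst g) (snd g)" if "g \<in> G" for g
    using G[OF that] \<epsilon> avg_pos_if_superlevel[of "snd g" \<epsilon>] unfolding lev_def by auto
  have a_pos: "0 < a g" if "g \<in> G" for g
    using G[OF that] avg_pos[OF that] unfolding a_def by simp
  have "countable G"
    by (rule countable_if_infsum_ennreal_finite[OF finite a_pos])
  then have "(\<integral>\<^sup>+ t. ennreal (t powr (q - 1)) *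
            emeasure lebesgue (\<Union>{ball x r | x r. (x, r) \<in> B \<and> t < lev (x, r)}) * indicator {\<epsilon>..} t \<partial>lborel)
      \<le> (\<Sum>\<^sub>\<infinity>g\<in>G. ennreal (measure lebesgue (ball (fst g) (M * snd g)) * (lev g / \<kappa>) powr q))"
    using \<kappa> \<epsilon> exponents(3) dominated G
    by (intro nn_integral_superlevel_union_le) (auto intro: less_trans)
  also have "\<dots> = (\<Sum>\<^sub>\<infinity>g\<in>G. ennreal C * ennreal (a g powr e))"
  proof (rule infsum_cong)
    fix g assume "g \<in> G"
    then show "ennreal (measure lebesgue (ball (fst g) (M * snd g)) * (lev g / \<kappa>) powr q)
        = ennreal C * ennreal (a g powr e)"
      using measure_ball_mult_level_powr[of "snd g" f "fst g" M \<kappa> q p e \<gamma>] G avg_pos M \<kappa> exponents(1,4) C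
      unfolding lev_def a_def C_def by (simp add: ennreal_mult)
  qed
  also have "\<dots> = ennreal C * (\<Sum>\<^sub>\<infinity>g\<in>G. ennreal (a g powr e))"
    by (rule infsum_cmult_right_ennreal)
  also have "\<dots> \<le> ennreal C * ennreal (enn2real (\<Sum>\<^sub>\<infinity>g\<in>G. ennreal (a g)) powr e)"
    using a_pos exponents(2) finite by (intro mult_left_mono infsum_powr_le_powr_infsum) auto
  finally show ?thesis
    using C unfolding C_def lev_def by (simp add: ennreal_mult)
qed

section \<open>Averages of $L^p$ functions over the maximal balls\<close>

context
  fixes f :: "'a::euclidean_space \<Rightarrow> real" and p :: real
  assumes f_meas: "f \<in> borel_measurable lebesgue"
    and f_Lp: "integrable lebesgue (\<lambda>x. \<bar>f x\<bar> powr p)" and p_ge_1: "1 \<le> p"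
begin

lemma set_integrable_abs_ball: "set_integrable lebesgue (ball y r) (\<lambda>x. \<bar>f x\<bar>)"
  unfolding set_integrable_def
proof (rule Bochner_Integration.integrable_bound)
  have ball: "ball y r \<in> sets lebesgue" "emeasure lebesgue (ball y r) < \<infinity>"
    using lmeasurable_ball[of y r] by (auto simp: fmeasurable_def)
  show "integrable lebesgue (\<lambda>x. indicator (ball y r) x + \<bar>f x\<bar> powr p)"
    using ball by (intro Bochner_Integration.integrable_add f_Lp integrable_real_indicator)
  show "(\<lambda>x. indicator (ball y r) x *\<^sub>R \<bar>f x\<bar>) \<in> borel_measurable lebesgue"
    using ball f_meas by (intro borel_measurable_scaleR borel_measurable_indicator borel_measurable_abs)
  show "AE x in lebesgue. norm (indicator (ball y r) x *\<^sub>R \<bar>f x\<bar>) \<le> norm (indicator (ball y r) x + \<bar>f x\<bar> powr p)"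
    using le_add_powr[of 1 p] p_ge_1 by (auto simp: indicator_def)
qed

lemma powr_avg_mono_ball:
  assumes "ball z t \<subseteq> ball y s" "0 < t" "0 < s"
  shows "t powr DIM('a) * avg f z t \<le> s powr DIM('a) * avg f y s"
proof -
  have "(LINT x:ball z t|lebesgue. \<bar>f x\<bar>) \<le> (LINT x:ball y s|lebesgue. \<bar>f x\<bar>)"
    unfolding set_lebesgue_integral_def using assms(1)
    by (intro integral_mono set_integrable_abs_ball[unfolded set_integrable_def])
      (auto simp: indicator_def)
  then show ?thesis
    using assms(2,3) by (simp add: avg_eq_ball_integral divide_right_mono)
qed

lemma avg_le_radius_powr:
  assumes "0 < r"
  shows "avg f y r \<le> r powr (- real DIM('a) / p) * (1 + (LINT x|lebesgue. \<bar>f x\<bar> powr p) / unit_ball_vol DIM('a))"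
proof -
  define d where "d = real DIM('a)"
  define \<omega> where "\<omega> = unit_ball_vol d"
  define \<tau> where "\<tau> = r powr (- d / p)"
  have \<omega>: "0 < \<omega>" and \<tau>: "0 < \<tau>" unfolding \<omega>_def \<tau>_def d_def using assms by auto
  have ball_meas: "measure lebesgue (ball y r) = \<omega> * r powr d"
    unfolding \<omega>_def d_def using assms by (intro measure_ball_powr) simp
  have int: "integrable lebesgue (\<lambda>x. \<tau> * indicator (ball y r) x + \<tau> powr (1 - p) * \<bar>f x\<bar> powr p)"
    using lmeasurable_ball[of y r]
    by (intro Bochner_Integration.integrable_add integrable_mult_right integrable_real_indicator f_Lp)
      (auto simp: fmeasurable_def)
  have "(LINT x:ball y r|lebesgue. \<bar>f x\<bar>) \<le> (LINT x|lebesgue. \<tau> * indicator (ball y r) x + \<tau> powr (1 - p) * \<bar>f x\<bar> powr p)"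
    unfolding set_lebesgue_integral_def
  proof (rule integral_mono[OF _ int])
    show "integrable lebesgue (\<lambda>x. indicator (ball y r) x *\<^sub>R \<bar>f x\<bar>)"
      using set_integrable_abs_ball unfolding set_integrable_def .
    show "indicator (ball y r) x *\<^sub>R \<bar>f x\<bar> \<le> \<tau> * indicator (ball y r) x + \<tau> powr (1 - p) * \<bar>f x\<bar> powr p" for x
      using le_add_powr[OF \<tau> p_ge_1, of "\<bar>f x\<bar>"] by (auto simp: indicator_def)
  qed
  also have "\<dots> = \<tau> * (\<omega> * r powr d) + \<tau> powr (1 - p) * (LINT x|lebesgue. \<bar>f x\<bar> powr p)"
    using f_Lp ball_meas lmeasurable_ball[of y r]
    by (subst Bochner_Integration.integral_add) (auto simp: fmeasurable_def intro!: integrable_real_indicator)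
  finally have "avg f y r \<le> (\<tau> * (\<omega> * r powr d) + \<tau> powr (1 - p) * (LINT x|lebesgue. \<bar>f x\<bar> powr p)) / (\<omega> * r powr d)"
    unfolding avg_def ball_meas using \<omega> assms by (intro divide_right_mono) auto
  also have "\<dots> = \<tau> + \<tau> powr (1 - p) * (LINT x|lebesgue. \<bar>f x\<bar> powr p) / (\<omega> * r powr d)"
    using \<omega> assms by (simp add: add_divide_distrib)
  also have "\<tau> powr (1 - p) = \<tau> * r powr d"
  proof -
    have "- d / p * (1 - p) = - d / p + d" using p_ge_1 by (simp add: field_simps)
    then show ?thesis unfolding \<tau>_def by (simp add: powr_powr powr_add[symmetric])
  qed
  also have "\<tau> + \<tau> * r powr d * (LINT x|lebesgue. \<bar>f x\<bar> powr p) / (\<omega> * r powr d)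
      = \<tau> * (1 + (LINT x|lebesgue. \<bar>f x\<bar> powr p) / \<omega>)"
    using \<omega> assms by (simp add: field_simps)
  finally show ?thesis
    unfolding \<tau>_def \<omega>_def d_def .
qed

lemma superlevel_radius_bounded:
  assumes "\<gamma> < DIM('a) / p" "0 < \<epsilon>"
  obtains R where "\<And>y r. 0 < r \<Longrightarrow> \<epsilon> < r powr \<gamma> * avg f y r \<Longrightarrow> r \<le> R"
proof -
  define A where "A = 1 + (LINT x|lebesgue. \<bar>f x\<bar> powr p) / unit_ball_vol DIM('a)"
  define \<delta> where "\<delta> = \<gamma> - DIM('a) / p"
  have A: "0 < A" unfolding A_def by (simp add: add_pos_nonneg)
  have \<delta>: "\<delta> < 0" unfolding \<delta>_def using assms by simp
  show thesis
  proof (rule that)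
    fix y r assume r: "0 < r" and level: "\<epsilon> < r powr \<gamma> * avg f y r"
    have "r powr \<gamma> * avg f y r \<le> r powr \<gamma> * (r powr (- real DIM('a) / p) * A)"
      using avg_le_radius_powr[OF r, of y] unfolding A_def by (intro mult_left_mono) auto
    also have "\<dots> = r powr \<delta> * A"
      unfolding \<delta>_def by (simp add: powr_add[symmetric])
    finally have "\<epsilon> / A < r powr \<delta>"
      using level A by (simp add: field_simps)
    then have "(r powr \<delta>) powr (1 / \<delta>) < (\<epsilon> / A) powr (1 / \<delta>)"
      using \<delta> A assms(2) by (intro powr_less_mono2_neg) auto
    then show "r \<le> (\<epsilon> / A) powr (1 / \<delta>)"
      using \<delta> r by (simp add: powr_powr)
  qed
qed

lemma radially_maximal_radius_bound:
  fixes \<alpha> c1 c2 r t :: real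
  assumes max: "radially_maximal \<alpha> f y r" and \<alpha>: "0 < \<alpha>" "\<alpha> < DIM('a)" and c1: "1 \<le> c1" and c2: "0 \<le> c2"
    and t: "0 < t" "r \<le> 2 * t" and meet: "ball y (c1 * r) \<inter> ball z (c1 * t) \<noteq> {}"
    and avg: "0 < avg f y r" "avg f y r < c2 * avg f z t"
  shows "t < (c2 * (3 * c1 + 2) powr (DIM('a) - \<alpha>)) powr (1 / \<alpha>) * r"
proof -
  define d where "d = real DIM('a)"
  define M where "M = 3 * c1 + 2"
  define s where "s = c1 * r + c1 * t + t"
  have r: "0 < r" using max unfolding radially_maximal_def by blast
  have "r \<le> c1 * r" "c1 * r \<le> 2 * (c1 * t)" "0 \<le> c1 * t" "M * t = 3 * (c1 * t) + 2 * t"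
    using c1 r t unfolding M_def by (auto simp: algebra_simps)
  then have rs: "r < s" and sM: "s \<le> M * t"
    unfolding s_def using t by linarith+
  have "t powr d * avg f z t \<le> s powr d * avg f y s"
    unfolding d_def using ball_subset_if_dilations_intersect[OF meet] t rs r
    by (intro powr_avg_mono_ball) (auto simp: s_def)
  also have "\<dots> = s powr (d - \<alpha>) * (s powr \<alpha> * avg f y s)"
    using rs r by (simp add: powr_diff)
  also have "\<dots> \<le> s powr (d - \<alpha>) * (r powr \<alpha> * avg f y r)"
    using max rs unfolding radially_maximal_def by (intro mult_left_mono) auto
  also have "\<dots> \<le> (M * t) powr (d - \<alpha>) * (r powr \<alpha> * avg f y r)"
    using sM rs r \<alpha> avg unfolding d_def by (intro mult_right_mono powr_mono2) auto
  finally have "c2 * (t powr d * avg f z t) \<le> c2 * ((M * t) powr (d - \<alpha>) * (r powr \<alpha> * avg f y r))"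
    using c2 by (intro mult_left_mono) auto
  moreover have "t powr d * avg f y r < c2 * (t powr d * avg f z t)"
    using avg t by simp
  moreover have "(M * t) powr (d - \<alpha>) = M powr (d - \<alpha>) * t powr (d - \<alpha>)"
    using t c1 unfolding M_def by (simp add: powr_mult)
  ultimately have "t powr d * avg f y r < (c2 * M powr (d - \<alpha>) * r powr \<alpha>) * t powr (d - \<alpha>) * avg f y r"
    by (simp add: algebra_simps)
  then have "t powr d < (c2 * M powr (d - \<alpha>) * r powr \<alpha>) * t powr (d - \<alpha>)"
    using avg by simp
  then have "t < (c2 * M powr (d - \<alpha>) * r powr \<alpha>) powr (1 / \<alpha>)"
    by (rule less_root_if_powr_less[OF t(1) \<alpha>(1)])
  then show ?thesis
    using r \<alpha> c1 c2 unfolding M_def d_def by (simp add: powr_powr powr_mult)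
qed

lemma conflicting_ball_dominates:
  fixes \<alpha> \<beta> c1 c2 r t :: real
  assumes max: "radially_maximal \<alpha> f y r" and \<alpha>: "0 < \<alpha>" "\<alpha> < DIM('a)"
    and c1: "1 \<le> c1" and c2: "1 \<le> c2" and t: "0 < t" "r \<le> 2 * t"
    and meet: "ball y (c1 * r) \<inter> ball z (c1 * t) \<noteq> {}"
    and avg: "0 < avg f y r" "avg f y r < c2 * avg f z t"
  shows "ball y r \<subseteq> ball z ((3 * c1 + 2) * t)"
    and "domination_constant DIM('a) \<alpha> \<beta> c1 c2 * (r powr (\<alpha> + \<beta>) * avg f y r) \<le> t powr (\<alpha> + \<beta>) * avg f z t"
proof -
  have r: "0 < r" using max unfolding radially_maximal_def by blast
  have "ball y r \<subseteq> ball z (c1 * t + c1 * r + r)"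
    using meet by (intro ball_subset_if_dilations_intersect) (simp add: Int_commute)
  also have "\<dots> \<subseteq> ball z ((3 * c1 + 2) * t)"
  proof (rule subset_ball)
    have "c1 * r \<le> c1 * (2 * t)" using t c1 by (intro mult_left_mono) auto
    then show "c1 * t + c1 * r + r \<le> (3 * c1 + 2) * t"
      using t by (simp add: algebra_simps)
  qed
  finally show "ball y r \<subseteq> ball z ((3 * c1 + 2) * t)" .
  have "t \<le> (c2 * (3 * c1 + 2) powr (DIM('a) - \<alpha>)) powr (1 / \<alpha>) * r"
    using radially_maximal_radius_bound[OF max \<alpha> c1 _ t meet avg] c2 by simp
  then show "domination_constant DIM('a) \<alpha> \<beta> c1 c2 * (r powr (\<alpha> + \<beta>) * avg f y r) \<le> t powr (\<alpha> + \<beta>) * avg f z t"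
    unfolding domination_constant_def using r t c2 avg by (intro powr_mult_le_if_comparable_radii) auto
qed

lemma exists_nonconflicting_covering_subfamily:
  fixes \<alpha> \<beta> c1 c2 \<epsilon> :: real and B :: "('a \<times> real) set"
  defines "lev \<equiv> \<lambda>b. snd b powr (\<alpha> + \<beta>) * avg f (fst b) (snd b)"
  assumes B: "B \<subseteq> Bc \<alpha> f \<union> Bu \<alpha> f" and \<beta>: "\<alpha> + \<beta> < DIM('a) / p" and c2: "0 < c2" and \<epsilon>: "0 < \<epsilon>"
  obtains G where "G \<subseteq> {b \<in> B. \<epsilon> < lev b}" "pairwise (\<lambda>b g. \<not> conflicting f c1 c2 b g) G"
    "\<And>b. b \<in> B \<Longrightarrow> \<epsilon> < lev b \<Longrightarrow> \<exists>g\<in>G. (g = b \<or> conflicting f c1 c2 b g) \<and> snd b \<le> 2 * snd g"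
proof -
  define F where "F = {b \<in> B. \<epsilon> < lev b}"
  have r: "0 < snd b" if "b \<in> F" for b
    using that B radially_maximal_if_mem_Bc_Bu unfolding F_def radially_maximal_def by blast
  have avg_pos: "0 < avg f (fst b) (snd b)" if "b \<in> F" for b
    using that unfolding F_def lev_def by (intro avg_pos_if_superlevel[OF r[OF that] less_imp_le[OF \<epsilon>]]) auto
  obtain R where "\<And>y r. 0 < r \<Longrightarrow> \<epsilon> < r powr (\<alpha> + \<beta>) * avg f y r \<Longrightarrow> r \<le> R"
    using superlevel_radius_bounded[OF \<beta> \<epsilon>] by blast
  then have bounded: "snd b \<le> R" if "b \<in> F" for b
    using r[OF that] that unfolding F_def lev_def by blast
  have "conflicting f c1 c2 b g = conflicting f c1 c2 g b" if "b \<in> F" "g \<in> F" for b g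
    using conflicting_sym[OF avg_pos[OF that(1)] avg_pos[OF that(2)] c2] .
  then obtain G where "G \<subseteq> F" "pairwise (\<lambda>b g. \<not> conflicting f c1 c2 b g) G"
    "\<And>b. b \<in> F \<Longrightarrow> \<exists>g\<in>G. (g = b \<or> conflicting f c1 c2 b g) \<and> snd b \<le> 2 * snd g"
    using exists_covering_selection[where F = F and \<rho> = snd and conf = "conflicting f c1 c2", OF r bounded]
    by blast
  then show thesis
    using that unfolding F_def by blast
qed

lemma exists_dominating_subfamily:
  fixes \<alpha> \<beta> c1 c2 \<epsilon> :: real and B :: "('a \<times> real) set"
  defines "lev \<equiv> \<lambda>b. snd b powr (\<alpha> + \<beta>) * avg f (fst b) (snd b)"
  assumes B: "B \<subseteq> Bc \<alpha> f \<union> Bu \<alpha> f"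
    and \<alpha>: "0 < \<alpha>" "\<alpha> < DIM('a)" and \<beta>: "\<alpha> + \<beta> < DIM('a) / p"
    and c1: "1 \<le> c1" and c2: "1 \<le> c2" and \<epsilon>: "0 < \<epsilon>"
  obtains G where "G \<subseteq> {b \<in> B. \<epsilon> < lev b}" "pairwise (\<lambda>b g. \<not> conflicting f c1 c2 b g) G"
    "\<And>b. b \<in> B \<Longrightarrow> \<epsilon> < lev b \<Longrightarrow> \<exists>g\<in>G. ball (fst b) (snd b) \<subseteq> ball (fst g) ((3 * c1 + 2) * snd g) \<and>
       domination_constant DIM('a) \<alpha> \<beta> c1 c2 * lev b \<le> lev g"
proof -
  have "0 < c2" using c2 by simp
  then obtain G where G: "G \<subseteq> {b \<in> B. \<epsilon> < lev b}" "pairwise (\<lambda>b g. \<not> conflicting f c1 c2 b g) G"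
    and cover: "\<And>b. b \<in> B \<Longrightarrow> \<epsilon> < lev b \<Longrightarrow> \<exists>g\<in>G. (g = b \<or> conflicting f c1 c2 b g) \<and> snd b \<le> 2 * snd g"
    unfolding lev_def by (rule exists_nonconflicting_covering_subfamily[OF B \<beta> _ \<epsilon>]) blast
  have max: "radially_maximal \<alpha> f (fst b) (snd b)" if "b \<in> B" for b
    using that B radially_maximal_if_mem_Bc_Bu by blast
  then have r: "0 < snd b" if "b \<in> B" for b
    using that unfolding radially_maximal_def by blast
  have "\<exists>g\<in>G. ball (fst b) (snd b) \<subseteq> ball (fst g) ((3 * c1 + 2) * snd g) \<and>
       domination_constant DIM('a) \<alpha> \<beta> c1 c2 * lev b \<le> lev g" if b: "b \<in> B" "\<epsilon> < lev b" for b
  proof -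
    obtain g where "g \<in> G" and g: "g = b \<or> conflicting f c1 c2 b g" and rg: "snd b \<le> 2 * snd g"
      using cover[OF b] by blast
    have avg_pos: "0 < avg f (fst b) (snd b)"
      using b \<epsilon> unfolding lev_def by (intro avg_pos_if_superlevel[OF r[OF b(1)], of \<epsilon>]) auto
    from g show ?thesis
    proof
      assume "g = b"
      moreover have "snd b \<le> (3 * c1 + 2) * snd b" using c1 r[OF b(1)] by simp
      moreover have "domination_constant DIM('a) \<alpha> \<beta> c1 c2 * lev b \<le> lev b"
        using b \<epsilon> c2 unfolding domination_constant_def by (intro mult_left_le_one_le) auto
      ultimately show ?thesis
        using \<open>g \<in> G\<close> by (auto intro!: subset_ball)
    next
      assume "conflicting f c1 c2 b g"
      then have "ball (fst b) (c1 * snd b) \<inter> ball (fst g) (c1 * snd g) \<noteq> {}"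
        and "avg f (fst b) (snd b) < c2 * avg f (fst g) (snd g)"
        using avg_pos c2 unfolding conflicting_def by (auto simp: field_simps)
      moreover have "0 < snd g" using G(1) \<open>g \<in> G\<close> r by blast
      ultimately show ?thesis
        using conflicting_ball_dominates[OF max[OF b(1)] \<alpha> c1 c2 _ rg _ avg_pos] \<open>g \<in> G\<close>
        unfolding lev_def by blast
    qed
  qed
  with G that show thesis by blast
qed

lemma superlevel_union_estimate:
  fixes \<alpha> \<beta> c1 c2 \<epsilon> :: real and B :: "('a \<times> real) set"
  defines "q \<equiv> 1 / (1 / p - (1 + \<alpha> + \<beta>) / real DIM('a))"
    and "e \<equiv> 1 / (1 - p * (1 + \<alpha> + \<beta>) / real DIM('a))"
  assumes B: "B \<subseteq> Bc \<alpha> f \<union> Bu \<alpha> f" and \<alpha>: "0 < \<alpha>" "\<alpha> < DIM('a)"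
    and p: "p < DIM('a) / (1 + \<alpha> + \<beta>)" and c1: "1 \<le> c1" and c2: "1 \<le> c2" and \<epsilon>: "0 < \<epsilon>"
  obtains G where "G \<subseteq> B" "pairwise (\<lambda>b g. \<not> conflicting f c1 c2 b g) G"
    "(\<Sum>\<^sub>\<infinity>g\<in>G. ennreal ((snd g powr (DIM('a) / p - 1) * avg f (fst g) (snd g)) powr p)) \<noteq> \<infinity> \<Longrightarrow>
      (\<integral>\<^sup>+ t. ennreal (t powr (q - 1)) *
         emeasure lebesgue (\<Union>{ball x r | x r. (x, r) \<in> B \<and> t < r powr (\<alpha> + \<beta>) * avg f x r})
         * indicator {\<epsilon>..} t \<partial>lborel)
      \<le> ennreal (unit_ball_vol DIM('a) * (3 * c1 + 2) powr DIM('a) * (1 / domination_constant DIM('a) \<alpha> \<beta> c1 c2) powr q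
           * enn2real (\<Sum>\<^sub>\<infinity>g\<in>G. ennreal ((snd g powr (DIM('a) / p - 1) * avg f (fst g) (snd g)) powr p)) powr e)"
proof -
  have \<gamma>: "0 < 1 + \<alpha> + \<beta>"
  proof (rule ccontr)
    assume "\<not> 0 < 1 + \<alpha> + \<beta>"
    then have "DIM('a) / (1 + \<alpha> + \<beta>) \<le> 0" by (simp add: divide_nonneg_nonpos)
    then show False using p p_ge_1 by simp
  qed
  then have p\<gamma>: "p * (1 + \<alpha> + \<beta>) < DIM('a)" and \<alpha>\<beta>: "\<alpha> + \<beta> < DIM('a) / p"
    using p p_ge_1 by (simp_all add: field_simps)
  have exponents: "q = p * e" "1 \<le> e" "1 \<le> q" "DIM('a) + (\<alpha> + \<beta>) * q = (DIM('a) / p - 1) * q"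
    using critical_exponents[OF p_ge_1 \<gamma> p\<gamma>] unfolding q_def e_def by simp_all
  obtain G where G: "G \<subseteq> {b \<in> B. \<epsilon> < snd b powr (\<alpha> + \<beta>) * avg f (fst b) (snd b)}"
    and separated: "pairwise (\<lambda>b g. \<not> conflicting f c1 c2 b g) G"
    and dominated: "\<And>b. b \<in> B \<Longrightarrow> \<epsilon> < snd b powr (\<alpha> + \<beta>) * avg f (fst b) (snd b) \<Longrightarrow>
       \<exists>g\<in>G. ball (fst b) (snd b) \<subseteq> ball (fst g) ((3 * c1 + 2) * snd g) \<and>
         domination_constant DIM('a) \<alpha> \<beta> c1 c2 * (snd b powr (\<alpha> + \<beta>) * avg f (fst b) (snd b))
           \<le> snd g powr (\<alpha> + \<beta>) * avg f (fst g) (snd g)"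
    using exists_dominating_subfamily[OF B \<alpha> \<alpha>\<beta> c1 c2 \<epsilon>] by blast
  have G_pos: "0 < snd g \<and> \<epsilon> < snd g powr (\<alpha> + \<beta>) * avg f (fst g) (snd g)" if "g \<in> G" for g
    using that G B radially_maximal_if_mem_Bc_Bu unfolding radially_maximal_def by blast
  have \<kappa>: "0 < domination_constant DIM('a) \<alpha> \<beta> c1 c2"
    using c1 c2 by (intro domination_constant_pos) auto
  have M: "0 < 3 * c1 + 2" using c1 by simp
  show thesis
  proof (rule that)
    show "G \<subseteq> B" using G by blast
  qed (use separated superlevel_integral_le_powr_sum[OF G_pos dominated \<kappa> \<epsilon> M exponents] in auto)
qed

end

theorem lemma4p1:
  fixes \<alpha> \<beta> p c1 c2 :: real
  assumes "0 < \<alpha>" "\<alpha> < real DIM('a::euclidean_space)" "1 \<le> p"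
    "p < real DIM('a) / (1 + \<alpha> + \<beta>)" "2 \<le> c1" "1 \<le> c2"
  shows "\<exists>C::real. \<forall>(f::'a \<Rightarrow> real) (\<epsilon>::real) \<B>.
     \<B> \<in> {Bc \<alpha> f, Bu \<alpha> f} \<longrightarrow> f \<in> borel_measurable lebesgue \<longrightarrow>
     integrable lebesgue (\<lambda>x. \<bar>f x\<bar> powr p) \<longrightarrow> 0 < \<epsilon> \<longrightarrow>
     (\<exists>Bt \<subseteq> \<B>.
        (\<forall>x r y s. (x, r) \<in> Bt \<and> (y, s) \<in> Bt \<and> (x, r) \<noteq> (y, s) \<longrightarrow>
            ball x (c1 * r) \<inter> ball y (c1 * s) = {} \<or> avg f y s / avg f x r \<notin> {1 / c2 <..< c2}) \<and>
        (let d = real DIM('a);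
             q = 1 / (1 / p - (1 + \<alpha> + \<beta>) / d);
             e = 1 / (1 - p * (1 + \<alpha> + \<beta>) / d);
             S = (\<Sum>\<^sub>\<infinity> b\<in>Bt. ennreal ((snd b powr (d / p - 1) * avg f (fst b) (snd b)) powr p))
         in S = \<infinity> \<or>
            (\<integral>\<^sup>+ t. ennreal (t powr (q - 1)) *
                 emeasure lebesgue (\<Union>{ball x r | x r. (x, r) \<in> \<B> \<and> t < r powr (\<alpha> + \<beta>) * avg f x r})
                 * indicator {\<epsilon>..} t \<partial>lborel)
            \<le> ennreal (C * enn2real S powr e)))"
proof -
  define C where "C = unit_ball_vol DIM('a) * (3 * c1 + 2) powr DIM('a) *
    (1 / domination_constant DIM('a) \<alpha> \<beta> c1 c2) powr (1 / (1 / p - (1 + \<alpha> + \<beta>) / real DIM('a)))"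
  have c1: "1 \<le> c1" using assms(5) by simp
  show ?thesis
  proof (intro exI[of _ C] allI impI, goal_cases)
    case (1 f \<epsilon> \<B>)
    then have "\<B> \<subseteq> Bc \<alpha> f \<union> Bu \<alpha> f" by auto
    then show ?case
    proof (rule superlevel_union_estimate[OF 1(2,3) assms(3) _ assms(1,2,4) c1 assms(6) 1(4)], goal_cases)
      case (1 G)
      then have "\<forall>x r y s. (x, r) \<in> G \<and> (y, s) \<in> G \<and> (x, r) \<noteq> (y, s) \<longrightarrow>
          ball x (c1 * r) \<inter> ball y (c1 * s) = {} \<or> avg f y s / avg f x r \<notin> {1 / c2 <..< c2}"
        unfolding pairwise_def conflicting_def by fastforce
      with 1 show ?case
        unfolding Let_def C_def by blast
    qed
  qed
qed

end
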